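(* Let $r\ge1$. For every $d\in\mathbb{Z}$ the limit $\mu^{(r)}(d):=\lim_{N\to\infty}\frac1N|\{n<N:\Delta^{(r)}(n)=d\}|$ exists and \[\mu^{(r)}(d)=\mathbb{P}(\{x\in\mathbb{X}:\Delta^{(r)}(x)=d\}).\] Moreover $\int_{\mathbb{X}}\Delta^{(r)}\,d\mathbb{P}=\sum_{d\in\mathbb{Z}}d\,\mu^{(r)}(d)=0$, and $\int_{\mathbb{X}}|\Delta^{(r)}|^j\,d\mathbb{P}<\infty$ for every $j\ge1$.
   Context: Fix an integer $b\ge2$. $\mathbb{X}:=\{0,\dots,b-1\}^{\mathbb{N}}$ is the space of $b$-adic integers ($x_0$ the units digit) with addition with carries extending addition on $\mathbb{N}$ ($\mathbb{N}$ embedded via base-$b$ digits); $\mathbb{P}$ is its normalized Haar measure (digits i.i.d. uniform). For $k\in\mathbb{N}$, $s_k(x):=x_0+\dots+x_k$, $\Delta_k^{(r)}(x):=s_k(x+r)-s_k(x)$, and $\Delta^{(r)}(x):=\lim_k\Delta_k^{(r)}(x)$, defined for all but finitely many $x$. For $n\in\mathbb{N}$, $\Delta^{(r)}(n)=s(n+r)-s(n)$, where $s$ is the base-$b$ sum-of-digits function. *)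

theory Defs
  imports "HOL-Probability.Probability"
begin

text \<open>b-adic integers: digit sequences x :: nat \<Rightarrow> nat, x 0 the units digit,
  all digits in {0..<b}.  Haar measure: infinite product of uniform measures on the digits.\<close>

definition haar :: "nat \<Rightarrow> (nat \<Rightarrow> nat) measure" where
  "haar b = (\<Pi>\<^sub>M i\<in>(UNIV::nat set). uniform_count_measure {0..<b})"

definition nat_digits :: "nat \<Rightarrow> nat \<Rightarrow> nat \<Rightarrow> nat" where
  "nat_digits b n i = (n div b ^ i) mod b"

fun carry :: "nat \<Rightarrow> nat \<Rightarrow> (nat \<Rightarrow> nat) \<Rightarrow> nat \<Rightarrow> nat" where
  "carry b r x 0 = 0"
| "carry b r x (Suc i) = (x i + nat_digits b r i + carry b r x i) div b"

definition add_nat :: "nat \<Rightarrow> (nat \<Rightarrow> nat) \<Rightarrow> nat \<Rightarrow> nat \<Rightarrow> nat" where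
  "add_nat b x r i = (x i + nat_digits b r i + carry b r x i) mod b"

definition partial_digit_sum :: "nat \<Rightarrow> (nat \<Rightarrow> nat) \<Rightarrow> nat" where
  "partial_digit_sum k x = (\<Sum>i\<le>k. x i)"

definition Delta_k :: "nat \<Rightarrow> nat \<Rightarrow> nat \<Rightarrow> (nat \<Rightarrow> nat) \<Rightarrow> int" where
  "Delta_k b r k x = int (partial_digit_sum k (add_nat b x r)) - int (partial_digit_sum k x)"

text \<open>The limit of an integer sequence exists iff the sequence is eventually constant;
  where the limit does not exist (finitely many x) we use the default value 0.\<close>
definition Delta :: "nat \<Rightarrow> nat \<Rightarrow> (nat \<Rightarrow> nat) \<Rightarrow> int" where
  "Delta b r x = (if \<exists>d. \<forall>\<^sub>F k in sequentially. Delta_k b r k x = d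
                  then (THE d. \<forall>\<^sub>F k in sequentially. Delta_k b r k x = d) else 0)"

definition mu :: "nat \<Rightarrow> nat \<Rightarrow> int \<Rightarrow> real" where
  "mu b r d = lim (\<lambda>N. real (card {n. n < N \<and> Delta b r (nat_digits b n) = d}) / real N)"

end

theory Submission
  imports Defs
begin

text \<open>Adding r to x changes only the digits of x below the first position K \<ge> r at which the
  carry dies out, so there Delta^(r)(x) equals Delta_{K-1}(x), a function of the first K digits.
  A carry still alive at position r + n forces n digits to equal b - 1, an event of probability
  b^-n. A function of the first K digits is b^K-periodic on the naturals, so its natural density
  is its Haar measure; squeezing {Delta^(r) = d} between such events up to these geometric tails
  gives the densities, and the same tails give all moments. Finally n \<mapsto> n + r permutes the
  residues mod b^K, so Delta_{K-1} has mean zero over a period, and the mean of Delta^(r) is a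
  limit of terms of order K b^(r-K).\<close>

lemma nat_digits_0: "nat_digits b m 0 = m mod b"
  by (simp add: nat_digits_def)

lemma nat_digits_Suc: "nat_digits b m (Suc i) = nat_digits b (m div b) i"
  by (simp add: nat_digits_def div_mult2_eq)

lemma nat_digits_less: "0 < b \<Longrightarrow> nat_digits b m i < b"
  by (simp add: nat_digits_def)

lemma nat_digits_eq_0: "m < b ^ i \<Longrightarrow> nat_digits b m i = 0"
  by (simp add: nat_digits_def)

lemma nat_digits_mod_power:
  assumes "0 < b" and "i < K"
  shows "nat_digits b (m mod b ^ K) i = nat_digits b m i"
proof -
  obtain k where "K = i + Suc k"
    using \<open>i < K\<close> by (metis add_Suc_right less_imp_Suc_add)
  then have "m mod b ^ K = m mod (b ^ i * b ^ Suc k)"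
    by (simp add: power_add ac_simps)
  then have "(m mod b ^ K) div b ^ i = (m div b ^ i) mod b ^ Suc k"
    using \<open>0 < b\<close> by (simp add: mod_mult2_eq)
  then show ?thesis
    by (simp add: nat_digits_def mod_mod_cancel)
qed

definition digit_value :: "nat \<Rightarrow> nat \<Rightarrow> (nat \<Rightarrow> nat) \<Rightarrow> nat" where
  "digit_value b K x = (\<Sum>i<K. x i * b ^ i)"

lemma digit_value_Suc: "digit_value b (Suc K) x = x 0 + b * digit_value b K (\<lambda>i. x (Suc i))"
  unfolding digit_value_def
  by (simp add: sum.lessThan_Suc_shift sum_distrib_left mult.left_commute del: sum.lessThan_Suc)

lemma digit_value_less: "(\<And>i. i < K \<Longrightarrow> x i < b) \<Longrightarrow> digit_value b K x < b ^ K"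
proof (induction K arbitrary: x)
  case 0
  then show ?case by (simp add: digit_value_def)
next
  case (Suc K)
  have "digit_value b K (\<lambda>i. x (Suc i)) + 1 \<le> b ^ K" and "x 0 < b"
    using Suc by (auto simp: Suc_le_eq)
  then have "x 0 + b * digit_value b K (\<lambda>i. x (Suc i)) < b * (digit_value b K (\<lambda>i. x (Suc i)) + 1)"
    by simp
  also have "\<dots> \<le> b * b ^ K"
    using \<open>digit_value b K (\<lambda>i. x (Suc i)) + 1 \<le> b ^ K\<close> by (rule mult_le_mono2)
  finally show ?case by (simp add: digit_value_Suc)
qed

lemma nat_digits_digit_value:
  "0 < b \<Longrightarrow> (\<And>i. i < K \<Longrightarrow> x i < b) \<Longrightarrow> i < K \<Longrightarrow> nat_digits b (digit_value b K x) i = x i"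
proof (induction K arbitrary: x i)
  case 0
  then show ?case by simp
next
  case (Suc K)
  have "(x 0 + b * digit_value b K (\<lambda>i. x (Suc i))) div b = digit_value b K (\<lambda>i. x (Suc i))"
    using Suc.prems by simp
  then show ?case
    using Suc Suc.IH[of "\<lambda>i. x (Suc i)" "i - 1"]
    by (cases i) (simp_all add: digit_value_Suc nat_digits_0 nat_digits_Suc)
qed

lemma digit_value_nat_digits: "digit_value b K (nat_digits b m) = m mod b ^ K"
proof (induction K arbitrary: m)
  case 0
  then show ?case by (simp add: digit_value_def)
next
  case (Suc K)
  have "digit_value b (Suc K) (nat_digits b m) = m mod b + b * ((m div b) mod b ^ K)"
    by (simp add: digit_value_Suc nat_digits_Suc nat_digits_0 Suc.IH)
  also have "\<dots> = m mod b ^ Suc K"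
    by (simp add: mod_mult2_eq)
  finally show ?case .
qed

lemma carry_nat_digits:
  assumes "0 < b"
  shows "carry b r (nat_digits b m) i = (m mod b ^ i + r mod b ^ i) div b ^ i"
proof (induction i)
  case 0
  then show ?case by simp
next
  case (Suc i)
  let ?B = "b ^ i"
  let ?c = "(m mod ?B + r mod ?B) div ?B"
  have m: "m mod (?B * b) = ?B * nat_digits b m i + m mod ?B"
    and r: "r mod (?B * b) = ?B * nat_digits b r i + r mod ?B"
    by (simp_all add: mod_mult2_eq nat_digits_def)
  have "m mod ?B + r mod ?B = ?B * ?c + (m mod ?B + r mod ?B) mod ?B"
    by simp
  then have "m mod (?B * b) + r mod (?B * b)
      = ?B * (nat_digits b m i + nat_digits b r i + ?c) + (m mod ?B + r mod ?B) mod ?B"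
    unfolding m r by (simp add: algebra_simps)
  then have "(m mod (?B * b) + r mod (?B * b)) div ?B = nat_digits b m i + nat_digits b r i + ?c"
    using assms by simp
  then have "(m mod (?B * b) + r mod (?B * b)) div (?B * b)
      = (nat_digits b m i + nat_digits b r i + ?c) div b"
    by (simp add: div_mult2_eq)
  then show ?case
    using Suc by (simp add: mult.commute)
qed

lemma add_nat_nat_digits: "0 < b \<Longrightarrow> add_nat b (nat_digits b m) r i = nat_digits b (m + r) i"
  unfolding add_nat_def carry_nat_digits
  by (simp add: nat_digits_def div_add1_eq[of m r "b ^ i"] mod_simps add.assoc)
    (metis add.left_commute mod_add_left_eq)

definition depends_on_digits :: "nat \<Rightarrow> ((nat \<Rightarrow> nat) \<Rightarrow> 'a) \<Rightarrow> bool" where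
  "depends_on_digits K F \<longleftrightarrow> (\<forall>x y. (\<forall>i<K. x i = y i) \<longrightarrow> F x = F y)"

lemma depends_on_digitsD:
  "depends_on_digits K F \<Longrightarrow> (\<And>i. i < K \<Longrightarrow> x i = y i) \<Longrightarrow> F x = F y"
  by (simp add: depends_on_digits_def)

lemma depends_on_digits_comp: "depends_on_digits K F \<Longrightarrow> depends_on_digits K (\<lambda>x. h (F x))"
  unfolding depends_on_digits_def by metis

lemma depends_on_digits_compose:
  "depends_on_digits K F \<Longrightarrow> depends_on_digits K G \<Longrightarrow> depends_on_digits K (\<lambda>x. h (F x) (G x))"
  unfolding depends_on_digits_def by metis

lemma carry_cong: "(\<And>j. j < i \<Longrightarrow> x j = y j) \<Longrightarrow> carry b r x i = carry b r y i"
  by (induction i) auto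

lemma depends_on_digits_carry: "i \<le> K \<Longrightarrow> depends_on_digits K (\<lambda>x. carry b r x i)"
  unfolding depends_on_digits_def by (auto intro: carry_cong)

lemma depends_on_digits_Delta_k: "k < K \<Longrightarrow> depends_on_digits K (Delta_k b r k)"
  unfolding depends_on_digits_def
proof (intro allI impI)
  fix x y :: "nat \<Rightarrow> nat"
  assume "k < K" and xy: "\<forall>i<K. x i = y i"
  have "add_nat b x r i = add_nat b y r i" if "i \<le> k" for i
    using that \<open>k < K\<close> xy depends_on_digitsD[OF depends_on_digits_carry[of i K b r], of x y]
    by (simp add: add_nat_def)
  then show "Delta_k b r k x = Delta_k b r k y"
    using \<open>k < K\<close> xy by (simp add: Delta_k_def partial_digit_sum_def)
qed

lemma Delta_k_Suc:
  "Delta_k b r (Suc k) x = Delta_k b r k x + int (add_nat b x r (Suc k)) - int (x (Suc k))"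
  by (simp add: Delta_k_def partial_digit_sum_def)

lemma abs_Delta_k_le:
  assumes "0 < b" and "\<And>i. x i < b"
  shows "\<bar>Delta_k b r k x\<bar> \<le> int ((k + 1) * b)"
proof -
  have "partial_digit_sum k (add_nat b x r) \<le> (k + 1) * b"
    unfolding partial_digit_sum_def
    using sum_bounded_above[of "{..k}" "add_nat b x r" b] by (simp add: add_nat_def assms(1) less_imp_le)
  moreover have "partial_digit_sum k x \<le> (k + 1) * b"
    unfolding partial_digit_sum_def
    using sum_bounded_above[of "{..k}" x b] assms(2) by (simp add: less_imp_le)
  ultimately show ?thesis
    unfolding Delta_k_def by linarith
qed

lemma Delta_eqI:
  assumes "\<forall>\<^sub>F k in sequentially. Delta_k b r k x = d"
  shows "Delta b r x = d"
proof -
  have "(THE d. \<forall>\<^sub>F k in sequentially. Delta_k b r k x = d) = d"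
  proof (rule the_equality)
    fix d' assume "\<forall>\<^sub>F k in sequentially. Delta_k b r k x = d'"
    with assms have "\<forall>\<^sub>F k in sequentially. d' = d"
      by eventually_elim simp
    then show "d' = d" by simp
  qed (fact assms)
  with assms show ?thesis
    unfolding Delta_def by auto
qed

lemma sum_shift_mod:
  fixes B r :: nat
  assumes "0 < B"
  shows "(\<Sum>m<B. f ((m + r) mod B)) = (\<Sum>m<B. f m)"
proof -
  have "inj_on (\<lambda>m. (m + r) mod B) {..<B}"
  proof (rule inj_onI)
    fix m m' assume "m \<in> {..<B}" "m' \<in> {..<B}" "(m + r) mod B = (m' + r) mod B"
    then obtain q q' where "m + r + B * q = m' + r + B * q'"
      unfolding nat_mod_eq_iff by blast
    then have "m + B * q = m' + B * q'"
      by simp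
    then have "m mod B = m' mod B"
      unfolding nat_mod_eq_iff by blast
    then show "m = m'"
      using \<open>m \<in> {..<B}\<close> \<open>m' \<in> {..<B}\<close> by simp
  qed
  moreover have "(\<lambda>m. (m + r) mod B) ` {..<B} \<subseteq> {..<B}"
    using assms by auto
  ultimately have "bij_betw (\<lambda>m. (m + r) mod B) {..<B} {..<B}"
    by (simp add: bij_betw_def endo_inj_surj)
  then show ?thesis
    by (rule sum.reindex_bij_betw)
qed

lemma sum_Delta_k_nat_digits:
  assumes "0 < b"
  shows "(\<Sum>m<b ^ Suc k. Delta_k b r k (nat_digits b m)) = 0"
proof -
  have "add_nat b (nat_digits b m) r i = nat_digits b ((m + r) mod b ^ Suc k) i" if "i \<le> k" for m i
    using that assms nat_digits_mod_power[of b i "Suc k" "m + r"] by (simp add: add_nat_nat_digits)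
  then have "Delta_k b r k (nat_digits b m)
      = int (partial_digit_sum k (nat_digits b ((m + r) mod b ^ Suc k)))
        - int (partial_digit_sum k (nat_digits b m))" for m
    by (simp add: Delta_k_def partial_digit_sum_def)
  then have "(\<Sum>m<b ^ Suc k. Delta_k b r k (nat_digits b m))
      = (\<Sum>m<b ^ Suc k. int (partial_digit_sum k (nat_digits b ((m + r) mod b ^ Suc k))))
        - (\<Sum>m<b ^ Suc k. int (partial_digit_sum k (nat_digits b m)))"
    by (simp only: sum_subtractf)
  also have "\<dots> = 0"
    using sum_shift_mod[of "b ^ Suc k" "\<lambda>m. int (partial_digit_sum k (nat_digits b m))" r] assms
    by simp
  finally show ?thesis .
qed

definition frequency :: "(nat \<Rightarrow> bool) \<Rightarrow> nat \<Rightarrow> real" where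
  "frequency P N = real (card {n. n < N \<and> P n}) / real N"

lemma frequency_mono: "(\<And>n. P n \<Longrightarrow> Q n) \<Longrightarrow> frequency P N \<le> frequency Q N"
  unfolding frequency_def by (intro divide_right_mono of_nat_mono card_mono) auto

lemma frequency_disj_le: "frequency (\<lambda>n. P n \<or> Q n) N \<le> frequency P N + frequency Q N"
proof -
  have "card {n. n < N \<and> (P n \<or> Q n)} \<le> card ({n. n < N \<and> P n} \<union> {n. n < N \<and> Q n})"
    by (intro card_mono) auto
  also have "\<dots> \<le> card {n. n < N \<and> P n} + card {n. n < N \<and> Q n}"
    by (rule card_Un_le)
  finally show ?thesis
    unfolding frequency_def add_divide_distrib[symmetric] by (intro divide_right_mono) simp_all
qed

lemma card_periodic_add:
  fixes N B :: nat
  shows "card {n. n < N + B \<and> P (n mod B)} = card {n. n < N \<and> P (n mod B)} + card {m. m < B \<and> P m}"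
proof (induction N)
  case 0
  have "{n. n < B \<and> P (n mod B)} = {m. m < B \<and> P m}"
    by auto
  then show ?case by simp
next
  case (Suc N)
  have "{n. n < Suc M \<and> Q n} = (if Q M then insert M else id) {n. n < M \<and> Q n}" for M and Q :: "nat \<Rightarrow> bool"
    by (auto simp: less_Suc_eq)
  then have "card {n. n < Suc M \<and> Q n} = card {n. n < M \<and> Q n} + of_bool (Q M)" for M Q
    by simp
  from this[of "N + B"] this[of N] Suc.IH show ?case
    by simp
qed

lemma card_periodic:
  fixes t q B :: nat
  shows "card {n. n < t + q * B \<and> P (n mod B)} = card {n. n < t \<and> P (n mod B)} + q * card {m. m < B \<and> P m}"
proof (induction q)
  case (Suc q)
  have "t + Suc q * B = (t + q * B) + B"
    by simp
  then show ?case
    by (simp only: card_periodic_add Suc.IH) simp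
qed simp

lemma abs_frequency_periodic_le:
  assumes "0 < B" and "0 < N"
  shows "\<bar>frequency (\<lambda>n. P (n mod B)) N - real (card {m. m < B \<and> P m}) / real B\<bar> \<le> real B / real N"
proof -
  define c where "c t = card {n. n < t \<and> P (n mod B)}" for t
  define c0 where "c0 = card {m. m < B \<and> P m}"
  define q t where "q = N div B" and "t = N mod B"
  have "N = t + q * B" and "t < B"
    using assms by (simp_all add: q_def t_def)
  have "c t \<le> card {..<t}" "c0 \<le> card {..<B}"
    unfolding c_def c0_def by (intro card_mono; auto)+
  then have "c t \<le> t" "c0 \<le> B"
    by simp_all
  have "real (c N) * real B - real c0 * real N = real B * real (c t) - real c0 * real t"
    using card_periodic[of t q B P] \<open>N = t + q * B\<close> by (simp add: c_def c0_def algebra_simps)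
  moreover have "real (c N) / real N - real c0 / real B
      = (real (c N) * real B - real c0 * real N) / (real N * real B)"
    using assms by (simp add: diff_frac_eq)
  ultimately have "real (c N) / real N - real c0 / real B
      = (real B * real (c t) - real c0 * real t) / (real N * real B)"
    by simp
  moreover have "\<bar>real B * real (c t) - real c0 * real t\<bar> \<le> real B * real B"
  proof -
    have "real B * real (c t) \<le> real B * real B" "real c0 * real t \<le> real B * real B"
      using \<open>c t \<le> t\<close> \<open>c0 \<le> B\<close> \<open>t < B\<close> by (auto intro!: mult_mono)
    moreover have "0 \<le> real B * real (c t)" "0 \<le> real c0 * real t"
      by simp_all
    ultimately show ?thesis
      unfolding abs_le_iff by linarith
  qed
  ultimately show ?thesis
    using assms by (simp add: frequency_def c_def c0_def divide_le_cancel field_simps)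
qed

lemma frequency_periodic:
  assumes "0 < B"
  shows "frequency (\<lambda>n. P (n mod B)) \<longlonglongrightarrow> real (card {m. m < B \<and> P m}) / real B"
proof -
  have "(\<lambda>N. frequency (\<lambda>n. P (n mod B)) N - real (card {m. m < B \<and> P m}) / real B) \<longlonglongrightarrow> 0"
  proof (rule Lim_null_comparison)
    show "\<forall>\<^sub>F N in sequentially.
        norm (frequency (\<lambda>n. P (n mod B)) N - real (card {m. m < B \<and> P m}) / real B) \<le> real B / real N"
      using eventually_gt_at_top[of 0] by eventually_elim (simp add: abs_frequency_periodic_le assms)
  qed (rule lim_const_over_n)
  then show ?thesis
    by (simp add: LIM_zero_iff)
qed

lemma tendsto_by_approximation:
  fixes s :: "nat \<Rightarrow> real"
  assumes "\<And>e. 0 < e \<Longrightarrow> \<exists>l u L U. l \<longlonglongrightarrow> L \<and> u \<longlonglongrightarrow> U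
      \<and> (\<forall>\<^sub>F n in sequentially. l n \<le> s n \<and> s n \<le> u n) \<and> L \<le> p \<and> p \<le> U \<and> U - L < e"
  shows "s \<longlonglongrightarrow> p"
proof (rule order_tendstoI)
  fix a assume "a < p"
  with assms[of "p - a"] obtain l u L U where
    "l \<longlonglongrightarrow> L" "\<forall>\<^sub>F n in sequentially. l n \<le> s n \<and> s n \<le> u n" "p \<le> U" "U - L < p - a"
    by auto
  then have "a < L"
    by linarith
  from order_tendstoD(1)[OF \<open>l \<longlonglongrightarrow> L\<close> this] \<open>\<forall>\<^sub>F n in sequentially. l n \<le> s n \<and> s n \<le> u n\<close>
  show "\<forall>\<^sub>F n in sequentially. a < s n"
    by eventually_elim simp
next
  fix a assume "p < a"
  with assms[of "a - p"] obtain l u L U where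
    "u \<longlonglongrightarrow> U" "\<forall>\<^sub>F n in sequentially. l n \<le> s n \<and> s n \<le> u n" "L \<le> p" "U - L < a - p"
    by auto
  then have "U < a"
    by linarith
  from order_tendstoD(2)[OF \<open>u \<longlonglongrightarrow> U\<close> this] \<open>\<forall>\<^sub>F n in sequentially. l n \<le> s n \<and> s n \<le> u n\<close>
  show "\<forall>\<^sub>F n in sequentially. s n < a"
    by eventually_elim simp
qed

lemma summable_power_times_geometric:
  fixes a q :: real
  assumes "0 < a" and "0 \<le> q" and "q < 1"
  shows "summable (\<lambda>n. (a + real n) ^ j * q ^ n)"
proof (rule summable_in_conv_radius)
  have "filterlim (\<lambda>n. a + real (Suc n)) at_top sequentially"
    by (intro filterlim_tendsto_add_at_top[OF tendsto_const]
        filterlim_compose[OF filterlim_real_sequentially filterlim_Suc])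
  then have "(\<lambda>n. 1 - 1 / (a + real (Suc n))) \<longlonglongrightarrow> 1 - 0"
    by (intro tendsto_intros tendsto_divide_0[OF tendsto_const] filterlim_at_top_imp_at_infinity)
  moreover have "1 - 1 / (a + real (Suc n)) = (a + real n) / (a + real (Suc n))" for n
    using assms(1) by (simp add: field_simps)
  ultimately have "(\<lambda>n. ((a + real n) / (a + real (Suc n))) ^ j) \<longlonglongrightarrow> 1 ^ j"
    by (intro tendsto_intros) simp
  then have "conv_radius (\<lambda>n. (a + real n) ^ j) = 1"
    using assms(1) by (intro conv_radius_ratio_limit_nonzero) (simp_all add: power_divide)
  then show "ereal (norm q) < conv_radius (\<lambda>n. (a + real n) ^ j)"
    using assms by simp
qed

lemma ex_layer_le:
  fixes a c y :: real
  assumes "0 < c" and "c * a < y"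
  shows "\<exists>n. c * (a + real n) < y \<and> y \<le> c * (a + 1 + real n)"
proof -
  obtain k :: nat where "(y - c * a) / c < real k"
    using reals_Archimedean2 by blast
  then have "y \<le> c * (a + 1 + real k)"
    using assms by (simp add: field_simps)
  define n where "n = (LEAST n. y \<le> c * (a + 1 + real n))"
  have "y \<le> c * (a + 1 + real n)"
    unfolding n_def by (rule LeastI) fact
  moreover have "c * (a + real n) < y"
  proof (cases n)
    case (Suc m)
    then have "\<not> y \<le> c * (a + 1 + real m)"
      using not_less_Least[of m "\<lambda>n. y \<le> c * (a + 1 + real n)"] by (simp add: n_def)
    then show ?thesis
      using Suc by (simp add: add.assoc)
  qed (use assms in simp)
  ultimately show ?thesis
    by blast
qed

lemma (in finite_measure) nn_integral_power_finite_if_geometric_tail: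
  fixes f :: "'a \<Rightarrow> real"
  assumes D: "\<And>n. D n \<in> sets M"
    and tail: "\<And>n x. x \<in> space M \<Longrightarrow> c * (a + real n) < \<bar>f x\<bar> \<Longrightarrow> x \<in> D n"
    and measure_D: "\<And>n. measure M (D n) \<le> q ^ n"
    and "0 < a" "0 < c" "0 \<le> q" "q < 1"
  shows "(\<integral>\<^sup>+x. ennreal (\<bar>f x\<bar> ^ j) \<partial>M) < \<infinity>"
proof -
  define w where "w n = (c * (a + 1 + real n)) ^ j" for n
  have bound: "ennreal (\<bar>f x\<bar> ^ j) \<le> ennreal ((c * a) ^ j) + (\<Sum>n. ennreal (w n) * indicator (D n) x)"
    if "x \<in> space M" for x
  proof (cases "\<bar>f x\<bar> \<le> c * a")
    case True
    then have "ennreal (\<bar>f x\<bar> ^ j) \<le> ennreal ((c * a) ^ j)"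
      by (intro ennreal_leI power_mono) simp_all
    then show ?thesis
      by (rule order_trans) simp
  next
    case False
    then obtain n where n: "c * (a + real n) < \<bar>f x\<bar>" "\<bar>f x\<bar> \<le> c * (a + 1 + real n)"
      using ex_layer_le[OF \<open>0 < c\<close>, of a "\<bar>f x\<bar>"] by (auto simp: not_le)
    then have "x \<in> D n"
      using tail that by blast
    then have "ennreal (\<bar>f x\<bar> ^ j) \<le> ennreal (w n) * indicator (D n) x"
      using n(2) unfolding w_def by (simp add: ennreal_leI power_mono)
    also have "\<dots> \<le> (\<Sum>n. ennreal (w n) * indicator (D n) x)"
      by (rule order_trans[OF _ sum_le_suminf[of _ "{n}"]], simp only: sum.insert_if finite.emptyI empty_iff if_False sum.empty add_0_right order_refl)
        simp_all
    also have "\<dots> \<le> ennreal ((c * a) ^ j) + (\<Sum>n. ennreal (w n) * indicator (D n) x)"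
      by simp
    finally show ?thesis .
  qed
  have summable: "summable (\<lambda>n. w n * q ^ n)"
    unfolding w_def power_mult_distrib mult.assoc
    using assms by (intro summable_mult summable_power_times_geometric) simp_all
  have "(\<integral>\<^sup>+x. ennreal (\<bar>f x\<bar> ^ j) \<partial>M)
      \<le> (\<integral>\<^sup>+x. ennreal ((c * a) ^ j) + (\<Sum>n. ennreal (w n) * indicator (D n) x) \<partial>M)"
    using bound by (intro nn_integral_mono) simp
  also have "\<dots> = ennreal ((c * a) ^ j) * emeasure M (space M) + (\<Sum>n. ennreal (w n) * emeasure M (D n))"
    using D by (simp add: nn_integral_add nn_integral_suminf nn_integral_cmult_indicator)
  also have "\<dots> \<le> ennreal ((c * a) ^ j) * emeasure M (space M) + (\<Sum>n. ennreal (w n * q ^ n))"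
  proof (intro add_left_mono suminf_le allI summableI)
    fix n
    have "ennreal (w n) * emeasure M (D n) \<le> ennreal (w n) * ennreal (q ^ n)"
      using measure_D[of n] by (intro mult_left_mono) (simp_all add: emeasure_eq_measure ennreal_leI)
    then show "ennreal (w n) * emeasure M (D n) \<le> ennreal (w n * q ^ n)"
      using assms by (simp add: ennreal_mult w_def)
  qed
  also have "\<dots> < \<infinity>"
    using summable assms by (simp add: suminf_ennreal2 w_def ennreal_mult_eq_top_iff finite_emeasure_space less_top[symmetric])
  finally show ?thesis .
qed

lemma space_haar: "space (haar b) = {x. \<forall>i. x i < b}"
  by (auto simp: haar_def space_PiM PiE_def Pi_def extensional_def space_uniform_count_measure)

locale b_adic =
  fixes b :: nat
  assumes base: "2 \<le> b"
begin

lemma base_pos: "0 < b"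
  using base by simp

sublocale prob_space "haar b"
  unfolding haar_def using base_pos by (intro prob_space_PiM prob_space_uniform_count_measure) auto

lemma nat_digits_in_space: "nat_digits b n \<in> space (haar b)"
  by (simp add: space_haar nat_digits_less[OF base_pos])

lemma haar_cylinder:
  assumes "finite J" and "\<And>i. i \<in> J \<Longrightarrow> v i < b"
  shows "{x \<in> space (haar b). \<forall>i\<in>J. x i = v i} \<in> sets (haar b)"
    and "measure (haar b) {x \<in> space (haar b). \<forall>i\<in>J. x i = v i} = (1 / real b) ^ card J"
proof -
  let ?U = "\<lambda>i::nat. uniform_count_measure {0..<b}"
  have cylinder: "{x \<in> space (haar b). \<forall>i\<in>J. x i = v i} = prod_emb UNIV ?U J (\<Pi>\<^sub>E j\<in>J. {v j})"
    by (auto simp: prod_emb_def haar_def[symmetric] space_haar space_PiM PiE_iff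
        space_uniform_count_measure)
  show "{x \<in> space (haar b). \<forall>i\<in>J. x i = v i} \<in> sets (haar b)"
    unfolding cylinder using assms
    by (subst haar_def, intro sets_PiM_I) (auto simp: sets_uniform_count_measure)
  have "emeasure (haar b) {x \<in> space (haar b). \<forall>i\<in>J. x i = v i} = (\<Prod>i\<in>J. emeasure (?U i) {v i})"
    unfolding cylinder using assms base_pos
    by (subst haar_def, intro emeasure_PiM_emb prob_space_uniform_count_measure)
      (auto simp: sets_uniform_count_measure)
  also have "\<dots> = ennreal ((1 / real b) ^ card J)"
    using assms by (simp add: emeasure_uniform_count_measure prod_ennreal ennreal_power)
  finally show "measure (haar b) {x \<in> space (haar b). \<forall>i\<in>J. x i = v i} = (1 / real b) ^ card J"
    by (simp add: measure_def)
qed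

lemma digit_value_vimage:
  "digit_value b K -` {m} \<inter> space (haar b) =
    (if m < b ^ K then {x \<in> space (haar b). \<forall>i\<in>{..<K}. x i = nat_digits b m i} else {})"
proof (cases "m < b ^ K")
  case True
  have "digit_value b K x = m \<longleftrightarrow> (\<forall>i\<in>{..<K}. x i = nat_digits b m i)" if "x \<in> space (haar b)" for x
  proof
    assume "digit_value b K x = m"
    then show "\<forall>i\<in>{..<K}. x i = nat_digits b m i"
      using nat_digits_digit_value[OF base_pos, of K x] that by (auto simp: space_haar)
  next
    assume "\<forall>i\<in>{..<K}. x i = nat_digits b m i"
    then have "digit_value b K x = digit_value b K (nat_digits b m)"
      by (simp add: digit_value_def)
    then show "digit_value b K x = m"
      using True by (simp add: digit_value_nat_digits)
  qed
  then show ?thesis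
    using True by auto
next
  case False
  then show ?thesis
    using digit_value_less[of K _ b] by (auto simp: space_haar)
qed

lemma measurable_digit_value: "digit_value b K \<in> measurable (haar b) (count_space UNIV)"
  unfolding measurable_count_space_eq2_countable
  using haar_cylinder(1)[of "{..<K}"] nat_digits_less[OF base_pos]
  by (auto simp: digit_value_vimage)

lemma measure_digit_value_eq:
  "m < b ^ K \<Longrightarrow> measure (haar b) (digit_value b K -` {m} \<inter> space (haar b)) = 1 / real b ^ K"
  using haar_cylinder(2)[of "{..<K}" "nat_digits b m"] nat_digits_less[OF base_pos]
  by (simp add: digit_value_vimage power_divide)

lemma depends_on_digits_digit_value:
  "depends_on_digits K F \<Longrightarrow> x \<in> space (haar b) \<Longrightarrow> F (nat_digits b (digit_value b K x)) = F x"
  by (erule depends_on_digitsD) (auto simp: space_haar nat_digits_digit_value[OF base_pos])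

lemma measurable_depends_on_digits:
  assumes "depends_on_digits K F" and "range F \<subseteq> space N"
  shows "F \<in> measurable (haar b) N"
proof -
  have "(\<lambda>x. F (nat_digits b (digit_value b K x))) \<in> measurable (haar b) N"
    using assms(2) by (intro measurable_compose[OF measurable_digit_value]) auto
  then show ?thesis
    using depends_on_digits_digit_value[OF assms(1)] by (simp cong: measurable_cong)
qed

lemma sets_depends_on_digits:
  assumes "depends_on_digits K Q"
  shows "{x \<in> space (haar b). Q x} \<in> sets (haar b)"
proof -
  have "Q \<in> measurable (haar b) (count_space UNIV)"
    using assms by (rule measurable_depends_on_digits) simp
  from measurable_sets[OF this, of "{True}"] show ?thesis
    by (simp add: vimage_def Int_def conj_commute)
qed

lemma integral_depends_on_digits:
  fixes F :: "(nat \<Rightarrow> nat) \<Rightarrow> real"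
  assumes "depends_on_digits K F"
  shows "integral\<^sup>L (haar b) F = (\<Sum>m<b ^ K. F (nat_digits b m)) / real b ^ K"
proof -
  let ?A = "\<lambda>m. digit_value b K -` {m} \<inter> space (haar b)"
  have A: "?A m \<in> sets (haar b)" for m
    using measurable_digit_value by (intro measurable_sets) auto
  have "integral\<^sup>L (haar b) F
      = integral\<^sup>L (haar b) (\<lambda>x. \<Sum>m<b ^ K. F (nat_digits b m) * indicator (?A m) x)"
  proof (rule Bochner_Integration.integral_cong[OF refl])
    fix x assume x: "x \<in> space (haar b)"
    then have "digit_value b K x < b ^ K"
      using digit_value_less[of K x b] by (auto simp: space_haar)
    with x show "F x = (\<Sum>m<b ^ K. F (nat_digits b m) * indicator (?A m) x)"
      using depends_on_digits_digit_value[OF assms x] by (simp add: indicator_def)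
  qed
  also have "\<dots> = (\<Sum>m<b ^ K. integral\<^sup>L (haar b) (\<lambda>x. F (nat_digits b m) * indicator (?A m) x))"
    using A by (intro Bochner_Integration.integral_sum integrable_mult_right integrable_real_indicator)
      (simp_all add: less_top[symmetric])
  also have "\<dots> = (\<Sum>m<b ^ K. F (nat_digits b m) * measure (haar b) (?A m))"
    using A by simp
  also have "\<dots> = (\<Sum>m<b ^ K. F (nat_digits b m) / real b ^ K)"
    using measure_digit_value_eq by (intro sum.cong) simp_all
  finally show ?thesis
    by (simp add: sum_divide_distrib)
qed

lemma measure_depends_on_digits:
  assumes "depends_on_digits K Q"
  shows "measure (haar b) {x \<in> space (haar b). Q x} = real (card {m. m < b ^ K \<and> Q (nat_digits b m)}) / real b ^ K"
proof -
  have "depends_on_digits K (\<lambda>x. of_bool (Q x) :: real)"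
    using assms by (rule depends_on_digits_comp)
  moreover have "measure (haar b) {x \<in> space (haar b). Q x}
      = integral\<^sup>L (haar b) (indicator {x \<in> space (haar b). Q x})"
    using sets_depends_on_digits[OF assms] by simp
  moreover have "\<dots> = integral\<^sup>L (haar b) (\<lambda>x. of_bool (Q x))"
    by (intro Bochner_Integration.integral_cong) (simp_all add: indicator_def)
  ultimately show ?thesis
    by (simp add: integral_depends_on_digits Int_def lessThan_def)
qed

lemma frequency_depends_on_digits:
  assumes "depends_on_digits K Q"
  shows "frequency (\<lambda>n. Q (nat_digits b n)) \<longlonglongrightarrow> measure (haar b) {x \<in> space (haar b). Q x}"
proof -
  have "Q (nat_digits b n) = Q (nat_digits b (n mod b ^ K))" for n
    by (rule depends_on_digitsD[OF assms]) (simp add: nat_digits_mod_power[OF base_pos])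
  then show ?thesis
    using frequency_periodic[of "b ^ K" "\<lambda>m. Q (nat_digits b m)"] base_pos
    by (simp add: measure_depends_on_digits[OF assms])
qed

lemma frequency_tendsto_if_cylinder_approx:
  assumes A: "{x \<in> space (haar b). A x} \<in> sets (haar b)"
    and dep: "\<And>n. depends_on_digits (K n) (C n)" "\<And>n. depends_on_digits (K n) (E n)"
    and inner: "\<And>n x. x \<in> space (haar b) \<Longrightarrow> C n x \<Longrightarrow> A x"
    and outer: "\<And>n x. x \<in> space (haar b) \<Longrightarrow> A x \<Longrightarrow> C n x \<or> E n x"
    and small: "(\<lambda>n. measure (haar b) {x \<in> space (haar b). E n x}) \<longlonglongrightarrow> 0"
  shows "frequency (\<lambda>n. A (nat_digits b n)) \<longlonglongrightarrow> measure (haar b) {x \<in> space (haar b). A x}"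
proof (rule tendsto_by_approximation)
  fix e :: real assume "0 < e"
  let ?p = "\<lambda>Q. measure (haar b) {x \<in> space (haar b). Q x}"
  let ?s = "frequency (\<lambda>n. A (nat_digits b n))"
  obtain n where "?p (E n) < e"
    using order_tendstoD(2)[OF small \<open>0 < e\<close>] by (auto dest: eventually_happens)
  define f1 where "f1 = frequency (\<lambda>m. C n (nat_digits b m))"
  define f2 where "f2 = frequency (\<lambda>m. E n (nat_digits b m))"
  have sets: "{x \<in> space (haar b). C n x} \<in> sets (haar b)" "{x \<in> space (haar b). E n x} \<in> sets (haar b)"
    by (rule sets_depends_on_digits[OF dep(1)], rule sets_depends_on_digits[OF dep(2)])
  have "?p (C n) \<le> ?p A"
    using inner A by (intro finite_measure_mono) auto
  moreover have "?p A \<le> ?p (C n) + ?p (E n)"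
  proof -
    have "?p A \<le> measure (haar b) ({x \<in> space (haar b). C n x} \<union> {x \<in> space (haar b). E n x})"
      using outer sets by (intro finite_measure_mono) auto
    also have "\<dots> \<le> ?p (C n) + ?p (E n)"
      using sets by (rule measure_Un_le)
    finally show ?thesis .
  qed
  moreover have "f1 N \<le> ?s N \<and> ?s N \<le> f1 N + f2 N" for N
  proof
    show "f1 N \<le> ?s N"
      unfolding f1_def by (rule frequency_mono) (use inner nat_digits_in_space in blast)
    have "?s N \<le> frequency (\<lambda>m. C n (nat_digits b m) \<or> E n (nat_digits b m)) N"
      by (rule frequency_mono) (use outer nat_digits_in_space in blast)
    also have "\<dots> \<le> f1 N + f2 N"
      unfolding f1_def f2_def by (rule frequency_disj_le)
    finally show "?s N \<le> f1 N + f2 N" .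
  qed
  moreover have "f1 \<longlonglongrightarrow> ?p (C n)" "(\<lambda>N. f1 N + f2 N) \<longlonglongrightarrow> ?p (C n) + ?p (E n)"
    unfolding f1_def f2_def
    using frequency_depends_on_digits[OF dep(1)] frequency_depends_on_digits[OF dep(2)]
    by (auto intro: tendsto_add)
  ultimately show "\<exists>l u L U. l \<longlonglongrightarrow> L \<and> u \<longlonglongrightarrow> U
      \<and> (\<forall>\<^sub>F N in sequentially. l N \<le> ?s N \<and> ?s N \<le> u N) \<and> L \<le> ?p A \<and> ?p A \<le> U \<and> U - L < e"
    using \<open>?p (E n) < e\<close>
    by (intro exI[of _ f1] exI[of _ "\<lambda>N. f1 N + f2 N"] exI[of _ "?p (C n)"] exI[of _ "?p (C n) + ?p (E n)"])
      (simp add: always_eventually)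
qed

end

declare carry.simps(2)[simp del]

locale b_adic_shift = b_adic +
  fixes r :: nat
  assumes shift: "1 \<le> r"
begin

lemma nat_digits_shift_eq_0: "r \<le> i \<Longrightarrow> nat_digits b r i = 0"
proof (rule nat_digits_eq_0)
  assume "r \<le> i"
  have "r < 2 ^ r"
    by (rule less_exp)
  also have "\<dots> \<le> b ^ r"
    using base by (intro power_mono) simp_all
  also have "\<dots> \<le> b ^ i"
    using base \<open>r \<le> i\<close> by (intro power_increasing) simp_all
  finally show "r < b ^ i" .
qed

lemma carry_le_1: "x \<in> space (haar b) \<Longrightarrow> carry b r x i \<le> 1"
proof (induction i)
  case (Suc i)
  have "x i < b"
    using Suc.prems by (simp add: space_haar)
  then have "x i + nat_digits b r i + carry b r x i < 2 * b"
    using Suc nat_digits_less[OF base_pos, of r i] by simp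
  then have "(x i + nat_digits b r i + carry b r x i) div b < 2"
    by (simp add: less_mult_imp_div_less)
  then show ?case
    by (simp add: carry.simps(2))
qed simp

lemma carry_Suc_neq_0D:
  assumes "x \<in> space (haar b)" and "r \<le> K" and "carry b r x (Suc K) \<noteq> 0"
  shows "carry b r x K = 1" and "x K = b - 1"
proof -
  have "b \<le> x K + carry b r x K"
    using assms(3) nat_digits_shift_eq_0[OF assms(2)] by (auto simp: carry.simps(2) div_eq_0_iff)
  moreover have "x K < b"
    using assms(1) by (simp add: space_haar)
  ultimately show "carry b r x K = 1" and "x K = b - 1"
    using carry_le_1[OF assms(1), of K] by auto
qed

lemma carry_eq_0_mono:
  assumes "x \<in> space (haar b)" and "r \<le> K" and "carry b r x K = 0" and "K \<le> j"
  shows "carry b r x j = 0"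
  using \<open>K \<le> j\<close>
proof (induction j rule: dec_induct)
  case (step n)
  have "r \<le> n"
    using assms(2) step.hyps(1) by simp
  show ?case
  proof (rule ccontr)
    assume "carry b r x (Suc n) \<noteq> 0"
    with carry_Suc_neq_0D(1)[OF assms(1) \<open>r \<le> n\<close>] step.IH show False
      by simp
  qed
qed (fact assms(3))

lemma carry_neq_0_digits:
  assumes "x \<in> space (haar b)" and "carry b r x (r + n) \<noteq> 0" and "i \<in> {r..<r + n}"
  shows "x i = b - 1"
  using assms(2,3)
proof (induction n)
  case (Suc n)
  then have "carry b r x (r + n) \<noteq> 0" and "x (r + n) = b - 1"
    using carry_Suc_neq_0D[OF assms(1), of "r + n"] by simp_all
  with Suc show ?case
    by (cases "i = r + n") simp_all
qed simp

lemma Delta_eq_Delta_k: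
  assumes x: "x \<in> space (haar b)" and "r \<le> K" and "carry b r x K = 0"
  shows "Delta b r x = Delta_k b r (K - 1) x"
proof (rule Delta_eqI)
  have "Delta_k b r k x = Delta_k b r (K - 1) x" if "K - 1 \<le> k" for k
    using that
  proof (induction k rule: dec_induct)
    case (step k)
    then have "carry b r x (Suc k) = 0"
      using carry_eq_0_mono[OF x \<open>r \<le> K\<close> \<open>carry b r x K = 0\<close>, of "Suc k"] by simp
    moreover have "r \<le> Suc k"
      using step \<open>r \<le> K\<close> by simp
    ultimately show ?case
      using step x by (simp add: Delta_k_Suc add_nat_def nat_digits_shift_eq_0 space_haar)
  qed simp
  then show "\<forall>\<^sub>F k in sequentially. Delta_k b r k x = Delta_k b r (K - 1) x"
    unfolding eventually_sequentially by blast
qed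

text \<open>If the carry never dies out, every digit from position r on is b - 1 and becomes 0, so
  each further step lowers Delta_k by b - 1; the limit does not exist and Delta is its default 0.\<close>
lemma Delta_eq_0_if_carry_neq_0:
  assumes x: "x \<in> space (haar b)" and carry: "\<And>K. r \<le> K \<Longrightarrow> carry b r x K \<noteq> 0"
  shows "Delta b r x = 0"
proof -
  have step: "Delta_k b r (Suc k) x = Delta_k b r k x - (int b - 1)" if "r \<le> k" for k
  proof -
    have "carry b r x (Suc k) = 1" and "x (Suc k) = b - 1"
      using carry_Suc_neq_0D[OF x, of "Suc k"] carry[of "Suc (Suc k)"] that by simp_all
    moreover have "nat_digits b r (Suc k) = 0"
      using that by (simp add: nat_digits_shift_eq_0)
    ultimately show ?thesis
      using base by (simp add: Delta_k_Suc add_nat_def)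
  qed
  have linear: "Delta_k b r (r + n) x = Delta_k b r r x - int n * (int b - 1)" for n
    by (induction n) (simp_all add: step algebra_simps)
  have "\<not> (\<exists>d. \<forall>\<^sub>F k in sequentially. Delta_k b r k x = d)"
  proof
    assume "\<exists>d. \<forall>\<^sub>F k in sequentially. Delta_k b r k x = d"
    then obtain d N where "\<And>k. N \<le> k \<Longrightarrow> Delta_k b r k x = d"
      by (auto simp: eventually_sequentially)
    then have "Delta_k b r (r + N) x = Delta_k b r (r + Suc N) x"
      by simp
    then have "int b - 1 = 0"
      using linear[of N] linear[of "Suc N"] by (simp add: algebra_simps)
    then show False
      using base by simp
  qed
  then show ?thesis
    unfolding Delta_def by simp
qed

lemma abs_Delta_le:
  assumes x: "x \<in> space (haar b)" and "r \<le> K" and "carry b r x K = 0"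
  shows "\<bar>Delta b r x\<bar> \<le> int (K * b)"
  using abs_Delta_k_le[OF base_pos, of x r "K - 1"] x shift \<open>r \<le> K\<close>
  by (simp add: Delta_eq_Delta_k[OF assms] space_haar)

end

context b_adic_shift
begin

lemma sets_carry_neq_0: "{x \<in> space (haar b). carry b r x K \<noteq> 0} \<in> sets (haar b)"
  using depends_on_digits_comp[OF depends_on_digits_carry[of K K b r], of "\<lambda>c. c \<noteq> 0"]
  by (intro sets_depends_on_digits) simp

lemma measure_carry_neq_0_le:
  "measure (haar b) {x \<in> space (haar b). carry b r x (r + n) \<noteq> 0} \<le> (1 / real b) ^ n"
proof -
  let ?S = "{x \<in> space (haar b). \<forall>i\<in>{r..<r + n}. x i = b - 1}"
  have S: "?S \<in> sets (haar b)" "measure (haar b) ?S = (1 / real b) ^ n"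
    using haar_cylinder[of "{r..<r + n}" "\<lambda>_. b - 1"] base_pos by simp_all
  have "{x \<in> space (haar b). carry b r x (r + n) \<noteq> 0} \<subseteq> ?S"
    using carry_neq_0_digits by blast
  then have "measure (haar b) {x \<in> space (haar b). carry b r x (r + n) \<noteq> 0} \<le> measure (haar b) ?S"
    using S by (intro finite_measure_mono) simp_all
  then show ?thesis
    using S by simp
qed

definition Delta_trunc :: "nat \<Rightarrow> (nat \<Rightarrow> nat) \<Rightarrow> real" where
  "Delta_trunc K x = (if carry b r x K = 0 then real_of_int (Delta_k b r (K - 1) x) else 0)"

lemma depends_on_digits_Delta_trunc: "1 \<le> K \<Longrightarrow> depends_on_digits K (Delta_trunc K)"
  unfolding Delta_trunc_def
  by (rule depends_on_digits_compose[where h = "\<lambda>c d. if c = 0 then real_of_int d else 0",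
        OF depends_on_digits_carry depends_on_digits_Delta_k]) simp_all

lemma Delta_trunc_eq_Delta:
  "x \<in> space (haar b) \<Longrightarrow> r \<le> K \<Longrightarrow> carry b r x K = 0 \<Longrightarrow> Delta_trunc K x = Delta b r x"
  by (simp add: Delta_trunc_def Delta_eq_Delta_k)

lemma abs_Delta_trunc_le:
  "x \<in> space (haar b) \<Longrightarrow> r \<le> K \<Longrightarrow> \<bar>Delta_trunc K x\<bar> \<le> \<bar>real_of_int (Delta b r x)\<bar>"
  by (cases "carry b r x K = 0") (simp_all add: Delta_trunc_eq_Delta, simp add: Delta_trunc_def)

lemma LIMSEQ_Delta_trunc:
  assumes x: "x \<in> space (haar b)"
  shows "(\<lambda>n. Delta_trunc (r + n) x) \<longlonglongrightarrow> real_of_int (Delta b r x)"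
proof (cases "\<exists>K\<ge>r. carry b r x K = 0")
  case True
  then obtain K where K: "r \<le> K" "carry b r x K = 0"
    by blast
  have "Delta_trunc (r + n) x = Delta b r x" if "K \<le> r + n" for n
    using carry_eq_0_mono[OF x K that] x by (simp add: Delta_trunc_eq_Delta)
  then show ?thesis
    by (intro tendsto_eventually) (auto simp: eventually_sequentially intro!: exI[of _ K])
next
  case False
  then have "Delta b r x = 0"
    by (intro Delta_eq_0_if_carry_neq_0[OF x]) auto
  moreover have "Delta_trunc (r + n) x = 0" for n
  proof -
    have "carry b r x (r + n) \<noteq> 0"
      using False by simp
    then show ?thesis
      by (simp add: Delta_trunc_def)
  qed
  ultimately show ?thesis
    by simp
qed

lemma borel_measurable_Delta: "(\<lambda>x. real_of_int (Delta b r x)) \<in> borel_measurable (haar b)"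
proof (rule borel_measurable_LIMSEQ_real[where u = "\<lambda>n. Delta_trunc (r + n)"])
  show "x \<in> space (haar b) \<Longrightarrow> (\<lambda>n. Delta_trunc (r + n) x) \<longlonglongrightarrow> real_of_int (Delta b r x)" for x
    by (rule LIMSEQ_Delta_trunc)
  show "Delta_trunc (r + n) \<in> borel_measurable (haar b)" for n
    using shift by (intro measurable_depends_on_digits[of "r + n"] depends_on_digits_Delta_trunc) simp_all
qed

lemma sets_Delta_eq: "{x \<in> space (haar b). Delta b r x = d} \<in> sets (haar b)"
proof -
  have "{x \<in> space (haar b). real_of_int (Delta b r x) = real_of_int d} \<in> sets (haar b)"
    using borel_measurable_Delta by measurable
  then show ?thesis
    by simp
qed

lemma frequency_Delta_eq:
  "frequency (\<lambda>n. Delta b r (nat_digits b n) = d) \<longlonglongrightarrow> measure (haar b) {x \<in> space (haar b). Delta b r x = d}"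
proof (rule frequency_tendsto_if_cylinder_approx[
      where K = "\<lambda>n. r + n" and C = "\<lambda>n x. carry b r x (r + n) = 0 \<and> Delta_k b r (r + n - 1) x = d"
        and E = "\<lambda>n x. carry b r x (r + n) \<noteq> 0", OF sets_Delta_eq])
  show "depends_on_digits (r + n) (\<lambda>x. carry b r x (r + n) = 0 \<and> Delta_k b r (r + n - 1) x = d)" for n
    using shift by (intro depends_on_digits_compose[OF depends_on_digits_carry depends_on_digits_Delta_k]) simp_all
  show "depends_on_digits (r + n) (\<lambda>x. carry b r x (r + n) \<noteq> 0)" for n
    by (intro depends_on_digits_comp[OF depends_on_digits_carry]) simp
  show "(\<lambda>n. measure (haar b) {x \<in> space (haar b). carry b r x (r + n) \<noteq> 0}) \<longlonglongrightarrow> 0"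
  proof (rule Lim_null_comparison[OF always_eventually LIMSEQ_power_zero[of "1 / real b"]])
    show "\<forall>n. norm (measure (haar b) {x \<in> space (haar b). carry b r x (r + n) \<noteq> 0}) \<le> (1 / real b) ^ n"
      using measure_carry_neq_0_le by simp
  qed (use base in simp)
  show "Delta b r x = d"
    if "x \<in> space (haar b)" "carry b r x (r + n) = 0 \<and> Delta_k b r (r + n - 1) x = d" for n x
    using that Delta_eq_Delta_k[of x "r + n"] by simp
  show "(carry b r x (r + n) = 0 \<and> Delta_k b r (r + n - 1) x = d) \<or> carry b r x (r + n) \<noteq> 0"
    if "x \<in> space (haar b)" "Delta b r x = d" for n x
    using that Delta_eq_Delta_k[of x "r + n"] by auto
qed

end

lemma has_sum_int_symmetric:
  fixes f :: "int \<Rightarrow> real"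
  assumes "f summable_on UNIV" and "(\<lambda>n. \<Sum>d\<in>{- int n..int n}. f d) \<longlonglongrightarrow> s"
  shows "(f has_sum s) UNIV"
proof -
  have "filterlim (\<lambda>n. {- int n..int n}) (finite_subsets_at_top UNIV) sequentially"
    unfolding filterlim_finite_subsets_at_top
  proof (intro allI impI)
    fix X :: "int set" assume "finite X \<and> X \<subseteq> UNIV"
    then have "X \<subseteq> {- int n..int n}" if "nat (\<Sum>x\<in>X. \<bar>x\<bar>) \<le> n" for n
      using that member_le_sum[of _ X abs] by (force simp: abs_le_iff)
    then show "\<forall>\<^sub>F n in sequentially. finite {- int n..int n} \<and> X \<subseteq> {- int n..int n} \<and> {- int n..int n} \<subseteq> UNIV"
      by (auto simp: eventually_sequentially)
  qed
  then have "(\<lambda>n. \<Sum>d\<in>{- int n..int n}. f d) \<longlonglongrightarrow> infsum f UNIV"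
    using has_sum_infsum[OF assms(1)] unfolding has_sum_def by (rule filterlim_compose[rotated])
  with assms have "infsum f UNIV = s"
    using LIMSEQ_unique by blast
  then show ?thesis
    using has_sum_infsum[OF assms(1)] by simp
qed

context b_adic_shift
begin

lemma nn_integral_abs_Delta_power_finite:
  "(\<integral>\<^sup>+x. ennreal (\<bar>real_of_int (Delta b r x)\<bar> ^ j) \<partial>haar b) < \<infinity>"
proof (rule nn_integral_power_finite_if_geometric_tail)
  show "{x \<in> space (haar b). carry b r x (r + n) \<noteq> 0} \<in> sets (haar b)" for n
    by (rule sets_carry_neq_0)
  show "measure (haar b) {x \<in> space (haar b). carry b r x (r + n) \<noteq> 0} \<le> (1 / real b) ^ n" for n
    by (rule measure_carry_neq_0_le)
  show "x \<in> {x \<in> space (haar b). carry b r x (r + n) \<noteq> 0}"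
    if "x \<in> space (haar b)" and "real b * (real r + real n) < \<bar>real_of_int (Delta b r x)\<bar>" for x n
  proof (rule ccontr)
    assume "x \<notin> {x \<in> space (haar b). carry b r x (r + n) \<noteq> 0}"
    then have "\<bar>Delta b r x\<bar> \<le> int ((r + n) * b)"
      using abs_Delta_le[OF that(1), of "r + n"] that(1) by simp
    then have "\<bar>real_of_int (Delta b r x)\<bar> \<le> real ((r + n) * b)"
      by (metis of_int_abs of_int_le_iff of_int_of_nat_eq)
    with that(2) show False
      by (simp add: algebra_simps)
  qed
qed (use base shift in simp_all)

lemma integrable_Delta: "integrable (haar b) (\<lambda>x. real_of_int (Delta b r x))"
  using nn_integral_abs_Delta_power_finite[of 1] borel_measurable_Delta
  by (intro integrableI_bounded) simp_all

lemma abs_integral_Delta_trunc_le: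
  "\<bar>integral\<^sup>L (haar b) (Delta_trunc (r + n))\<bar> \<le> real b * ((real r + real n) * (1 / real b) ^ n)"
proof -
  define K where "K = r + n"
  define g where "g m = real_of_int (Delta_k b r (K - 1) (nat_digits b m))" for m
  define P where "P m \<longleftrightarrow> carry b r (nat_digits b m) K \<noteq> 0" for m
  have "1 \<le> K" "r \<le> K"
    using shift by (simp_all add: K_def)
  have "(\<Sum>m<b ^ K. g m) = 0"
    using sum_Delta_k_nat_digits[OF base_pos, of r "K - 1"] \<open>1 \<le> K\<close>
    unfolding g_def by (simp flip: of_int_sum)
  have "(\<Sum>m<b ^ K. Delta_trunc K (nat_digits b m)) = (\<Sum>m<b ^ K. g m - (if P m then g m else 0))"
    by (intro sum.cong refl) (simp add: Delta_trunc_def g_def P_def)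
  also have "\<dots> = - (\<Sum>m<b ^ K. if P m then g m else 0)"
    using \<open>(\<Sum>m<b ^ K. g m) = 0\<close> by (simp only: sum_subtractf)
  also have "\<bar>\<dots>\<bar> \<le> (\<Sum>m<b ^ K. real K * real b * of_bool (P m))"
  proof -
    have "\<bar>g m\<bar> \<le> real K * real b" for m
      using abs_Delta_k_le[OF base_pos, of "nat_digits b m" r "K - 1"] \<open>1 \<le> K\<close>
      unfolding g_def by (simp add: nat_digits_less[OF base_pos] flip: of_int_abs) (simp add: of_nat_mult[symmetric] del: of_nat_mult)
    then show ?thesis
      unfolding abs_minus_cancel by (intro order.trans[OF sum_abs] sum_mono) simp
  qed
  also have "\<dots> = real K * real b * real b ^ K * measure (haar b) {x \<in> space (haar b). carry b r x K \<noteq> 0}"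
    using measure_depends_on_digits[OF depends_on_digits_comp[OF depends_on_digits_carry[of K K b r]], of "\<lambda>c. c \<noteq> 0"]
      base_pos
    by (simp add: sum_distrib_left[symmetric] P_def Int_def lessThan_def)
  finally have "\<bar>integral\<^sup>L (haar b) (Delta_trunc K)\<bar>
      \<le> real K * real b * measure (haar b) {x \<in> space (haar b). carry b r x K \<noteq> 0}"
    using base_pos \<open>1 \<le> K\<close>
    by (simp add: integral_depends_on_digits[OF depends_on_digits_Delta_trunc] field_simps)
  also have "\<dots> \<le> real K * real b * (1 / real b) ^ n"
    using measure_carry_neq_0_le[of n] by (intro mult_left_mono) (simp_all add: K_def)
  finally show ?thesis
    by (simp add: K_def algebra_simps)
qed

lemma integral_Delta_eq_0: "integral\<^sup>L (haar b) (\<lambda>x. real_of_int (Delta b r x)) = 0"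
proof (rule LIMSEQ_unique)
  show "(\<lambda>n. integral\<^sup>L (haar b) (Delta_trunc (r + n))) \<longlonglongrightarrow> integral\<^sup>L (haar b) (\<lambda>x. real_of_int (Delta b r x))"
  proof (rule integral_dominated_convergence[where w = "\<lambda>x. \<bar>real_of_int (Delta b r x)\<bar>"])
    show "Delta_trunc (r + n) \<in> borel_measurable (haar b)" for n
      using shift by (intro measurable_depends_on_digits[of "r + n"] depends_on_digits_Delta_trunc) simp_all
    show "AE x in haar b. (\<lambda>n. Delta_trunc (r + n) x) \<longlonglongrightarrow> real_of_int (Delta b r x)"
      by (rule AE_I2) (rule LIMSEQ_Delta_trunc)
    show "AE x in haar b. norm (Delta_trunc (r + n) x) \<le> \<bar>real_of_int (Delta b r x)\<bar>" for n
      by (rule AE_I2) (simp add: abs_Delta_trunc_le)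
  qed (simp_all add: borel_measurable_Delta integrable_Delta)
  have "summable (\<lambda>n. (real r + real n) ^ 1 * (1 / real b) ^ n)"
    by (rule summable_power_times_geometric) (use base shift in simp_all)
  then have "(\<lambda>n. (real r + real n) ^ 1 * (1 / real b) ^ n) \<longlonglongrightarrow> 0"
    by (rule summable_LIMSEQ_zero)
  from tendsto_mult_left[OF this, of "real b"]
  have "(\<lambda>n. real b * ((real r + real n) * (1 / real b) ^ n)) \<longlonglongrightarrow> 0"
    by simp
  then show "(\<lambda>n. integral\<^sup>L (haar b) (Delta_trunc (r + n))) \<longlonglongrightarrow> 0"
    by (rule Lim_null_comparison[OF always_eventually, rotated]) (simp add: abs_integral_Delta_trunc_le)
qed

lemma indicator_Delta_sum_eq:
  fixes w :: "int \<Rightarrow> real"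
  assumes "finite F" and "x \<in> space (haar b)"
  shows "(\<Sum>d\<in>F. w d * indicator {x \<in> space (haar b). Delta b r x = d} x)
      = (if Delta b r x \<in> F then w (Delta b r x) else 0)"
proof -
  have "(\<Sum>d\<in>F. w d * indicator {x \<in> space (haar b). Delta b r x = d} x)
      = (\<Sum>d\<in>F. if Delta b r x = d then w d else 0)"
    using assms(2) by (intro sum.cong) (simp_all add: indicator_def)
  also have "\<dots> = (if Delta b r x \<in> F then w (Delta b r x) else 0)"
    by (rule sum.delta'[OF assms(1)])
  finally show ?thesis .
qed

lemma integral_indicator_Delta_sum:
  fixes w :: "int \<Rightarrow> real"
  assumes "finite F"
  shows "integral\<^sup>L (haar b) (\<lambda>x. \<Sum>d\<in>F. w d * indicator {x \<in> space (haar b). Delta b r x = d} x)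
      = (\<Sum>d\<in>F. w d * measure (haar b) {x \<in> space (haar b). Delta b r x = d})"
    and "integrable (haar b) (\<lambda>x. \<Sum>d\<in>F. w d * indicator {x \<in> space (haar b). Delta b r x = d} x)"
  using sets_Delta_eq
  by (simp_all add: Bochner_Integration.integral_sum integrable_real_indicator
      less_top[symmetric])

lemma summable_on_Delta_distribution:
  "(\<lambda>d. real_of_int d * measure (haar b) {x \<in> space (haar b). Delta b r x = d}) summable_on UNIV"
proof (rule abs_summable_summable, rule nonneg_bdd_above_summable_on)
  show "bdd_above (sum (\<lambda>d. norm (real_of_int d * measure (haar b) {x \<in> space (haar b). Delta b r x = d}))
      ` {F. F \<subseteq> UNIV \<and> finite F})"
  proof (rule bdd_aboveI, clarsimp)
    fix F :: "int set" assume "finite F"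
    have "(\<Sum>d\<in>F. \<bar>real_of_int d\<bar> * measure (haar b) {x \<in> space (haar b). Delta b r x = d})
        \<le> integral\<^sup>L (haar b) (\<lambda>x. \<bar>real_of_int (Delta b r x)\<bar>)"
      unfolding integral_indicator_Delta_sum(1)[OF \<open>finite F\<close>, symmetric]
      using integral_indicator_Delta_sum(2)[OF \<open>finite F\<close>] integrable_Delta
      by (intro integral_mono) (auto simp: indicator_Delta_sum_eq[OF \<open>finite F\<close>])
    then show "(\<Sum>d\<in>F. \<bar>real_of_int d * measure (haar b) {x \<in> space (haar b). Delta b r x = d}\<bar>)
        \<le> integral\<^sup>L (haar b) (\<lambda>x. \<bar>real_of_int (Delta b r x)\<bar>)"
      by (simp add: abs_mult)
  qed
qed simp

lemma has_sum_Delta_distribution: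
  "((\<lambda>d. real_of_int d * measure (haar b) {x \<in> space (haar b). Delta b r x = d})
     has_sum integral\<^sup>L (haar b) (\<lambda>x. real_of_int (Delta b r x))) UNIV"
proof (rule has_sum_int_symmetric[OF summable_on_Delta_distribution])
  let ?S = "\<lambda>n x. \<Sum>d\<in>{- int n..int n}. real_of_int d * indicator {x \<in> space (haar b). Delta b r x = d} x"
  have "(\<lambda>n. integral\<^sup>L (haar b) (?S n)) \<longlonglongrightarrow> integral\<^sup>L (haar b) (\<lambda>x. real_of_int (Delta b r x))"
  proof (rule integral_dominated_convergence[where w = "\<lambda>x. \<bar>real_of_int (Delta b r x)\<bar>"])
    show "AE x in haar b. (\<lambda>n. ?S n x) \<longlonglongrightarrow> real_of_int (Delta b r x)"
    proof (rule AE_I2)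
      fix x assume x: "x \<in> space (haar b)"
      have "?S n x = real_of_int (Delta b r x)" if "nat \<bar>Delta b r x\<bar> \<le> n" for n
        by (subst indicator_Delta_sum_eq[OF finite_atLeastAtMost_int x]) (use that in \<open>auto simp: abs_le_iff\<close>)
      then show "(\<lambda>n. ?S n x) \<longlonglongrightarrow> real_of_int (Delta b r x)"
        by (intro tendsto_eventually) (auto simp: eventually_sequentially)
    qed
    show "?S n \<in> borel_measurable (haar b)" for n
      by (rule borel_measurable_integrable, rule integral_indicator_Delta_sum(2)) simp
    show "AE x in haar b. norm (?S n x) \<le> \<bar>real_of_int (Delta b r x)\<bar>" for n
      by (rule AE_I2) (subst indicator_Delta_sum_eq[OF finite_atLeastAtMost_int], simp_all)
  qed (use borel_measurable_Delta integrable_Delta in auto)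
  then show "(\<lambda>n. \<Sum>d\<in>{- int n..int n}. real_of_int d * measure (haar b) {x \<in> space (haar b). Delta b r x = d})
      \<longlonglongrightarrow> integral\<^sup>L (haar b) (\<lambda>x. real_of_int (Delta b r x))"
    by (simp only: integral_indicator_Delta_sum(1)[OF finite_atLeastAtMost_int])
qed

lemma mu_eq_measure: "mu b r d = measure (haar b) {x \<in> space (haar b). Delta b r x = d}"
  using limI[OF frequency_Delta_eq] by (simp add: mu_def frequency_def[abs_def])

end

theorem mainTheorem6:
  fixes b r :: nat
  assumes "b \<ge> 2" and "r \<ge> 1"
  shows "(\<forall>d::int.
           (\<lambda>N. real (card {n. n < N \<and> Delta b r (nat_digits b n) = d}) / real N)
             \<longlonglongrightarrow> measure (haar b) {x \<in> space (haar b). Delta b r x = d})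
       \<and> (\<forall>d::int. mu b r d = measure (haar b) {x \<in> space (haar b). Delta b r x = d})
       \<and> integrable (haar b) (\<lambda>x. real_of_int (Delta b r x))
       \<and> ((\<lambda>d::int. real_of_int d * mu b r d) has_sum
            (\<integral>x. real_of_int (Delta b r x) \<partial>haar b)) UNIV
       \<and> (\<integral>x. real_of_int (Delta b r x) \<partial>haar b) = 0
       \<and> (\<forall>j::nat. j \<ge> 1 \<longrightarrow>
            (\<integral>\<^sup>+x. ennreal (\<bar>real_of_int (Delta b r x)\<bar> ^ j) \<partial>haar b) < \<infinity>)"
proof -
  interpret b_adic_shift b r
    using assms by unfold_locales
  show ?thesis
    using frequency_Delta_eq has_sum_Delta_distribution integrable_Delta integral_Delta_eq_0
      nn_integral_abs_Delta_power_finite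
    by (auto simp: frequency_def[abs_def] mu_eq_measure)
qed

end
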